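(* Let $(K,\nu)$ be a valued field with $\nu$ a rank-one discrete valuation normalized so that $\nu(K^* )=\mathbb{Z}$, with valuation ring $R_\nu$ and uniformizer $\pi$. Let $f(x)=x^n+a\in R_\nu[x]$ with $\nu(a)=m\ge1$ and $\gcd(m,n)=1$. Let $\alpha$ be a root of $f$, $L=K(\alpha)$, and $S$ the integral closure of $R_\nu$ in $L$. Let $s,t\in\mathbb{Z}$ satisfy $ms-nt=1$ and put $\theta=\alpha^s/\pi^t$. Then $f(x)$ is irreducible over $K$ and $S=R_\nu[\theta]$ (i.e., $\theta$ generates a power basis of $S$ over $R_\nu$). *)

theory Defs
  imports "HOL-Computational_Algebra.Polynomial"
begin

text \<open>The valuation is only meaningful on nonzero elements (nu 0 = infinity
  by convention; the value stored at 0 is irrelevant).\<close>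
definition discrete_valuation :: "('a::field \<Rightarrow> int) \<Rightarrow> bool" where
  "discrete_valuation \<nu> \<longleftrightarrow>
     (\<forall>x y. x \<noteq> 0 \<longrightarrow> y \<noteq> 0 \<longrightarrow> \<nu> (x * y) = \<nu> x + \<nu> y) \<and>
     (\<forall>x y. x \<noteq> 0 \<longrightarrow> y \<noteq> 0 \<longrightarrow> x + y \<noteq> 0 \<longrightarrow> \<nu> (x + y) \<ge> min (\<nu> x) (\<nu> y)) \<and>
     \<nu> ` (UNIV - {0}) = UNIV"

definition val_ring :: "('a::field \<Rightarrow> int) \<Rightarrow> 'a set" where
  "val_ring \<nu> = {x. x = 0 \<or> \<nu> x \<ge> 0}"

text \<open>A field embedding (ring homomorphism of fields, automatically injective).\<close>
definition field_embedding :: "('a::field \<Rightarrow> 'b::field) \<Rightarrow> bool" where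
  "field_embedding \<phi> \<longleftrightarrow> \<phi> 1 = 1 \<and> (\<forall>x y. \<phi> (x + y) = \<phi> x + \<phi> y) \<and>
                            (\<forall>x y. \<phi> (x * y) = \<phi> x * \<phi> y)"

definition is_subfield :: "'b::field set \<Rightarrow> bool" where
  "is_subfield F \<longleftrightarrow> 0 \<in> F \<and> 1 \<in> F \<and> (\<forall>x\<in>F. \<forall>y\<in>F. x + y \<in> F \<and> x * y \<in> F) \<and>
     (\<forall>x\<in>F. - x \<in> F) \<and> (\<forall>x\<in>F. x \<noteq> 0 \<longrightarrow> inverse x \<in> F)"

definition gen_subfield :: "'b::field set \<Rightarrow> 'b set" where
  "gen_subfield A = \<Inter> {F. is_subfield F \<and> A \<subseteq> F}"

definition integral_closure :: "'b::field set \<Rightarrow> 'b set \<Rightarrow> 'b set" where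
  "integral_closure R L =
     {x \<in> L. \<exists>p. lead_coeff p = 1 \<and> (\<forall>i. coeff p i \<in> R) \<and> poly p x = 0}"

definition ring_adjoin :: "'b::field set \<Rightarrow> 'b \<Rightarrow> 'b set" where
  "ring_adjoin R \<theta> = {poly p \<theta> | p. \<forall>i. coeff p i \<in> R}"

end

(*
  Weight the coefficients of a polynomial p = sum p_i x^i by w(p_i) + B*i, where w is a
  valuation. The least weight, together with the first and the last index at which it is
  attained, is additive under multiplication (Gauss' lemma for the monomial valuation).

  For f = x^n + a take w = n*nu and B = nu(a) = m: the least weight n*m is attained exactly at
  the indices 0 and n. A factor g of f with 0 < deg g < n would attain its least weight exactly
  at 0 and at deg g, so n*nu(g_0) = n*nu(lc g) + m*deg g and n would divide m*deg g, which is
  impossible when gcd(m, n) = 1.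

  Since m*s - n*t = 1, theta = alpha^s / pi^t satisfies theta^n = b with nu(b) = 1, and
  alpha = c*theta^m with c in K; hence K(alpha) = K(theta) = K[theta], and x^n - b is
  irreducible by the same argument. Write an element of K(theta) as r(theta) with deg r < n
  and weigh r by n*nu(r_i) + i; these weights are pairwise incongruent modulo n. If some r_i
  is not in R_nu, the least weight is negative and attained at a single index, and then the
  same holds for p(r) for every monic p over R_nu. Every multiple of x^n - b, however, attains
  its least weight at indices at least n apart, so r(theta) is not integral. Conversely,
  R_nu[theta] is spanned by 1, theta, ..., theta^(n-1) as an R_nu-module, so its elements are
  integral by the determinant trick.
*)

theory Submission
  imports Defs "Jordan_Normal_Form.Char_Poly"
begin

section \<open>Integer-valued valuations\<close>

locale int_valuation =
  fixes v :: "'a::field \<Rightarrow> int"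
  assumes v_mult: "x \<noteq> 0 \<Longrightarrow> y \<noteq> 0 \<Longrightarrow> v (x * y) = v x + v y"
    and v_add: "x \<noteq> 0 \<Longrightarrow> y \<noteq> 0 \<Longrightarrow> x + y \<noteq> 0 \<Longrightarrow> min (v x) (v y) \<le> v (x + y)"

lemma discrete_valuation_imp_int_valuation:
  "discrete_valuation \<nu> \<Longrightarrow> int_valuation \<nu>"
  unfolding discrete_valuation_def int_valuation_def by blast

lemma int_valuation_scale:
  assumes "int_valuation v" and "0 \<le> N"
  shows "int_valuation (\<lambda>x. N * v x)"
proof
  interpret int_valuation v by fact
  fix x y :: 'a
  show "x \<noteq> 0 \<Longrightarrow> y \<noteq> 0 \<Longrightarrow> N * v (x * y) = N * v x + N * v y"
    by (simp add: v_mult distrib_left)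
  assume "x \<noteq> 0" "y \<noteq> 0" "x + y \<noteq> 0"
  then have "N * min (v x) (v y) \<le> N * v (x + y)"
    using v_add \<open>0 \<le> N\<close> by (simp add: mult_left_mono)
  then show "min (N * v x) (N * v y) \<le> N * v (x + y)"
    using \<open>0 \<le> N\<close> by (simp add: min_mult_distrib_left)
qed

context int_valuation
begin

lemma v_one [simp]: "v 1 = 0"
  using v_mult[of 1 1] by simp

lemma v_minus: "v (- x) = v x"
proof (cases "x = 0")
  case False
  have "v (-1) = 0"
    using v_mult[of "-1" "-1"] by simp
  then show ?thesis
    using v_mult[OF _ False, of "-1"] by simp
qed simp

lemma v_inverse: "x \<noteq> 0 \<Longrightarrow> v (inverse x) = - v x"
  using v_mult[of x "inverse x"] by simp

lemma v_power: "x \<noteq> 0 \<Longrightarrow> v (x ^ k) = int k * v x"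
  by (induction k) (simp_all add: v_mult algebra_simps)

lemma v_power_int: "x \<noteq> 0 \<Longrightarrow> v (x powi k) = k * v x"
  by (simp add: power_int_def v_power v_inverse)

lemma v_divide: "x \<noteq> 0 \<Longrightarrow> y \<noteq> 0 \<Longrightarrow> v (x / y) = v x - v y"
  by (simp add: divide_inverse v_mult v_inverse)

lemma v_add_dominant:
  assumes "x \<noteq> 0" and "y = 0 \<or> v x < v y"
  shows "x + y \<noteq> 0 \<and> v (x + y) = v x"
proof (cases "y = 0")
  case False
  with assms have less: "v x < v y" by simp
  have "x + y \<noteq> 0"
    using less v_minus[of x] by (auto simp: add_eq_0_iff)
  moreover have "v x \<le> v (x + y)"
    using v_add[OF assms(1) False \<open>x + y \<noteq> 0\<close>] less by simp
  moreover have "min (v (x + y)) (v (- y)) \<le> v x"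
    using v_add[of "x + y" "- y"] \<open>x + y \<noteq> 0\<close> False assms(1) by simp
  ultimately show ?thesis
    using less v_minus[of y] by linarith
qed (use assms in simp)

(* 0 has valuation +infinity: the junk value v 0 is never consulted. *)
definition val_ge :: "'a \<Rightarrow> int \<Rightarrow> bool" where
  "val_ge x e \<longleftrightarrow> x = 0 \<or> e \<le> v x"

definition val_gt :: "'a \<Rightarrow> int \<Rightarrow> bool" where
  "val_gt x e \<longleftrightarrow> x = 0 \<or> e < v x"

lemma val_ge_0 [simp]: "val_ge 0 e" and val_gt_0 [simp]: "val_gt 0 e"
  by (simp_all add: val_ge_def val_gt_def)

lemma val_gt_imp_ge: "val_gt x e \<Longrightarrow> val_ge x e"
  by (auto simp: val_ge_def val_gt_def)

lemma val_ge_imp_gt: "val_ge x e \<Longrightarrow> e' < e \<Longrightarrow> val_gt x e'"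
  by (auto simp: val_ge_def val_gt_def)

lemma val_ring_iff_val_ge: "x \<in> val_ring v \<longleftrightarrow> val_ge x 0"
  by (simp add: val_ring_def val_ge_def)

lemma val_ge_add: "val_ge x e \<Longrightarrow> val_ge y e \<Longrightarrow> val_ge (x + y) e"
  using v_add[of x y] by (force simp: val_ge_def)

lemma val_gt_add: "val_gt x e \<Longrightarrow> val_gt y e \<Longrightarrow> val_gt (x + y) e"
  using v_add[of x y] by (force simp: val_gt_def)

lemma val_ge_sum: "(\<And>i. i \<in> A \<Longrightarrow> val_ge (f i) e) \<Longrightarrow> val_ge (sum f A) e"
  by (induction A rule: infinite_finite_induct) (simp_all add: val_ge_add)

lemma val_gt_sum: "(\<And>i. i \<in> A \<Longrightarrow> val_gt (f i) e) \<Longrightarrow> val_gt (sum f A) e"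
  by (induction A rule: infinite_finite_induct) (simp_all add: val_gt_add)

lemma val_ge_mult: "val_ge x e1 \<Longrightarrow> val_ge y e2 \<Longrightarrow> val_ge (x * y) (e1 + e2)"
  by (cases "x = 0 \<or> y = 0") (auto simp: val_ge_def v_mult)

lemma val_gt_mult:
  "val_ge x e1 \<Longrightarrow> val_ge y e2 \<Longrightarrow> val_gt x e1 \<or> val_gt y e2 \<Longrightarrow> val_gt (x * y) (e1 + e2)"
  by (cases "x = 0 \<or> y = 0") (auto simp: val_ge_def val_gt_def v_mult)

section \<open>Edges of the Newton polygon\<close>

(* c is the least weight v(p_i) + B*i of a nonzero coefficient of p, and l and h are the first
   and the last index attaining it: the endpoints of the edge of slope -B of the Newton polygon
   of p. *)
definition dominant_span :: "int \<Rightarrow> 'a poly \<Rightarrow> int \<Rightarrow> nat \<Rightarrow> nat \<Rightarrow> bool" where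
  "dominant_span B p c l h \<longleftrightarrow>
     l \<le> h \<and> coeff p l \<noteq> 0 \<and> coeff p h \<noteq> 0 \<and>
     v (coeff p l) + B * int l = c \<and> v (coeff p h) + B * int h = c \<and>
     (\<forall>i. val_ge (coeff p i) (c - B * int i)) \<and>
     (\<forall>i<l. val_gt (coeff p i) (c - B * int i)) \<and>
     (\<forall>i>h. val_gt (coeff p i) (c - B * int i))"

lemma dominant_span_weight:
  assumes "dominant_span B p c l h" and "coeff p i \<noteq> 0"
  shows "c \<le> v (coeff p i) + B * int i"
    and "v (coeff p i) + B * int i = c \<Longrightarrow> l \<le> i \<and> i \<le> h"
  using assms unfolding dominant_span_def val_ge_def val_gt_def
  by (force, metis add_diff_cancel_right' leI less_irrefl)

lemma dominant_span_unique:
  assumes "dominant_span B p c l h" and "dominant_span B p c' l' h'"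
  shows "c = c' \<and> l = l' \<and> h = h'"
proof -
  have ends: "coeff p l \<noteq> 0" "coeff p h \<noteq> 0" "coeff p l' \<noteq> 0" "coeff p h' \<noteq> 0"
    and weights: "v (coeff p l) + B * int l = c" "v (coeff p h) + B * int h = c"
      "v (coeff p l') + B * int l' = c'" "v (coeff p h') + B * int h' = c'"
    using assms by (simp_all add: dominant_span_def)
  have "c = c'"
    using dominant_span_weight(1)[OF assms(1) ends(3)] dominant_span_weight(1)[OF assms(2) ends(1)]
      weights by linarith
  then show ?thesis
    using dominant_span_weight(2)[OF assms(1)] dominant_span_weight(2)[OF assms(2)] ends weights
    by (metis le_antisym)
qed

lemma dominant_span_exists:
  assumes "p \<noteq> 0"
  shows "\<exists>c l h. dominant_span B p c l h"
proof -
  define w where "w i = v (coeff p i) + B * int i" for i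
  define I where "I = {i. coeff p i \<noteq> 0}"
  have "finite I"
    unfolding I_def by (rule finite_subset[of _ "{..degree p}"]) (auto intro: le_degree)
  moreover have "I \<noteq> {}"
    using assms by (auto simp: I_def poly_eq_iff)
  ultimately have c_min: "Min (w ` I) \<le> w i" if "i \<in> I" for i
    using that by simp
  have c_in: "Min (w ` I) \<in> w ` I"
    using \<open>finite I\<close> \<open>I \<noteq> {}\<close> by simp
  define c where "c = Min (w ` I)"
  define J where "J = {i \<in> I. w i = c}"
  have "finite J" and "J \<noteq> {}"
    using \<open>finite I\<close> c_in by (auto simp: J_def c_def)
  define l where "l = Min J"
  define h where "h = Max J"
  have "l \<in> J" "h \<in> J" "l \<le> h"
    using \<open>finite J\<close> \<open>J \<noteq> {}\<close> by (simp_all add: l_def h_def)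
  have bound: "val_ge (coeff p i) (c - B * int i)" for i
    using c_min[of i] unfolding val_ge_def I_def c_def w_def by force
  have strict: "val_gt (coeff p i) (c - B * int i)" if "i \<notin> J" for i
    using that c_min[of i] unfolding val_gt_def J_def I_def c_def w_def by force
  have "i \<notin> J" if "i < l \<or> h < i" for i
    using that \<open>finite J\<close> by (auto simp: l_def h_def dest: Min_le Max_ge)
  then have "dominant_span B p c l h"
    unfolding dominant_span_def
    using \<open>l \<in> J\<close> \<open>h \<in> J\<close> \<open>l \<le> h\<close> bound strict by (auto simp: J_def I_def w_def)
  then show ?thesis by blast
qed

lemma coeff_mult_partial_sum_bound:
  assumes ge_p: "\<forall>i. val_ge (coeff p i) (c1 - B * int i)"
    and ge_q: "\<forall>i. val_ge (coeff q i) (c2 - B * int i)" and "I \<subseteq> {..k}"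
  shows "val_ge (\<Sum>i\<in>I. coeff p i * coeff q (k - i)) (c1 + c2 - B * int k)"
    and "(\<And>i. i \<in> I \<Longrightarrow>
           val_gt (coeff p i) (c1 - B * int i) \<or> val_gt (coeff q (k - i)) (c2 - B * int (k - i)))
         \<Longrightarrow> val_gt (\<Sum>i\<in>I. coeff p i * coeff q (k - i)) (c1 + c2 - B * int k)"
proof -
  have weight: "c1 - B * int i + (c2 - B * int (k - i)) = c1 + c2 - B * int k" if "i \<in> I" for i
    using that \<open>I \<subseteq> {..k}\<close> by (auto simp: of_nat_diff algebra_simps)
  show "val_ge (\<Sum>i\<in>I. coeff p i * coeff q (k - i)) (c1 + c2 - B * int k)"
    using val_ge_mult ge_p ge_q weight by (intro val_ge_sum) metis
  show "val_gt (\<Sum>i\<in>I. coeff p i * coeff q (k - i)) (c1 + c2 - B * int k)"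
    if "\<And>i. i \<in> I \<Longrightarrow>
          val_gt (coeff p i) (c1 - B * int i) \<or> val_gt (coeff q (k - i)) (c2 - B * int (k - i))"
    using val_gt_mult ge_p ge_q weight that by (intro val_gt_sum) metis
qed

lemma coeff_mult_dominant_term:
  assumes ge_p: "\<forall>i. val_ge (coeff p i) (c1 - B * int i)"
    and ge_q: "\<forall>i. val_ge (coeff q i) (c2 - B * int i)"
    and "i0 \<le> k" and "coeff p i0 \<noteq> 0" and "coeff q (k - i0) \<noteq> 0"
    and "v (coeff p i0) + B * int i0 = c1" and "v (coeff q (k - i0)) + B * int (k - i0) = c2"
    and strict: "\<And>i. i \<le> k \<Longrightarrow> i \<noteq> i0 \<Longrightarrow>
      val_gt (coeff p i) (c1 - B * int i) \<or> val_gt (coeff q (k - i)) (c2 - B * int (k - i))"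
  shows "coeff (p * q) k \<noteq> 0 \<and> v (coeff (p * q) k) + B * int k = c1 + c2"
proof -
  have split: "coeff (p * q) k = coeff p i0 * coeff q (k - i0)
      + (\<Sum>i\<in>{..k} - {i0}. coeff p i * coeff q (k - i))"
    unfolding coeff_mult using \<open>i0 \<le> k\<close> by (simp add: sum.remove)
  have "val_gt (\<Sum>i\<in>{..k} - {i0}. coeff p i * coeff q (k - i)) (c1 + c2 - B * int k)"
    using strict by (intro coeff_mult_partial_sum_bound(2)[OF ge_p ge_q]) auto
  moreover have "v (coeff p i0 * coeff q (k - i0)) = c1 + c2 - B * int k"
    using assms(3-7) by (simp add: v_mult of_nat_diff algebra_simps)
  ultimately show ?thesis
    unfolding split using v_add_dominant[of "coeff p i0 * coeff q (k - i0)"] assms(4,5)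
    by (simp add: val_gt_def)
qed

lemma dominant_span_mult:
  assumes p: "dominant_span B p c1 l1 h1" and q: "dominant_span B q c2 l2 h2"
  shows "dominant_span B (p * q) (c1 + c2) (l1 + l2) (h1 + h2)"
proof -
  have ge_p: "\<forall>i. val_ge (coeff p i) (c1 - B * int i)"
    and ge_q: "\<forall>i. val_ge (coeff q i) (c2 - B * int i)"
    using p q by (simp_all add: dominant_span_def)
  have strict: "val_gt (coeff p i) (c1 - B * int i) \<or> val_gt (coeff q (k - i)) (c2 - B * int (k - i))"
    if "i < l1 \<or> k - i < l2 \<or> h1 < i \<or> h2 < k - i" for k i
    using that p q by (auto simp: dominant_span_def)
  have "coeff (p * q) (l1 + l2) \<noteq> 0 \<and> v (coeff (p * q) (l1 + l2)) + B * int (l1 + l2) = c1 + c2"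
    using p q by (intro coeff_mult_dominant_term[OF ge_p ge_q, of l1] strict)
      (auto simp: dominant_span_def)
  moreover have "coeff (p * q) (h1 + h2) \<noteq> 0 \<and> v (coeff (p * q) (h1 + h2)) + B * int (h1 + h2) = c1 + c2"
    using p q by (intro coeff_mult_dominant_term[OF ge_p ge_q, of h1] strict)
      (auto simp: dominant_span_def)
  moreover have "val_ge (coeff (p * q) k) (c1 + c2 - B * int k)" for k
    unfolding coeff_mult by (rule coeff_mult_partial_sum_bound(1)[OF ge_p ge_q]) simp
  moreover have "val_gt (coeff (p * q) k) (c1 + c2 - B * int k)" if "k < l1 + l2 \<or> h1 + h2 < k" for k
    unfolding coeff_mult using that by (intro coeff_mult_partial_sum_bound(2)[OF ge_p ge_q] strict) auto
  moreover have "l1 \<le> h1" "l2 \<le> h2"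
    using p q by (simp_all add: dominant_span_def)
  ultimately show ?thesis
    by (simp add: dominant_span_def del: of_nat_add)
qed

lemma dominant_span_add_smaller:
  assumes p: "dominant_span B p c l h" and q: "\<forall>i. val_gt (coeff q i) (c - B * int i)"
  shows "dominant_span B (p + q) c l h"
proof -
  have "coeff (p + q) i \<noteq> 0 \<and> v (coeff (p + q) i) + B * int i = c"
    if "coeff p i \<noteq> 0" and "v (coeff p i) + B * int i = c" for i
  proof -
    have "coeff q i = 0 \<or> v (coeff p i) < v (coeff q i)"
      using q that(2) by (auto simp: val_gt_def)
    then show ?thesis
      using v_add_dominant[OF that(1)] that(2) by simp
  qed
  then show ?thesis
    using p q unfolding dominant_span_def by (auto intro: val_ge_add val_gt_imp_ge val_gt_add)
qed

lemma dominant_span_one: "dominant_span B 1 0 0 0"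
  by (simp add: dominant_span_def val_ge_def coeff_1)

lemma dominant_span_power:
  assumes "dominant_span B p c l h"
  shows "dominant_span B (p ^ k) (int k * c) (k * l) (k * h)"
proof (induction k)
  case (Suc k)
  show ?case
    using dominant_span_mult[OF assms Suc] by (simp add: algebra_simps)
qed (simp add: dominant_span_one)

lemma dominant_span_binomial:
  assumes "0 < n" and "a \<noteq> 0" and "v a = B * int n"
  shows "dominant_span B (monom 1 n + [:a:]) (B * int n) 0 n"
proof -
  have coeffs: "coeff (monom 1 n + [:a:]) i = (if i = n then 1 else 0) + (if i = 0 then a else 0)" for i
    by (simp add: coeff_const)
  show ?thesis
    using assms unfolding dominant_span_def coeffs by (auto simp: val_ge_def val_gt_def)
qed

lemma dominant_span_pcompose:
  assumes r: "dominant_span B r \<mu> l l" and "\<mu> < 0"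
    and monic: "lead_coeff p = 1" and integral: "\<forall>j. val_ge (coeff p j) 0"
  shows "dominant_span B (pcompose p r) (int (degree p) * \<mu>) (degree p * l) (degree p * l)"
proof -
  define k where "k = degree p"
  have "pcompose p r = (\<Sum>j\<le>k. [:coeff p j:] * r ^ j)"
    unfolding pcompose_altdef poly_altdef k_def by (simp add: degree_map_poly coeff_map_poly)
  also have "\<dots> = r ^ k + (\<Sum>j<k. [:coeff p j:] * r ^ j)"
    using monic by (simp add: k_def lessThan_Suc_atMost[symmetric])
  finally have decomp: "pcompose p r = r ^ k + (\<Sum>j<k. [:coeff p j:] * r ^ j)" .
  have "val_gt (coeff ([:coeff p j:] * r ^ j) i) (int k * \<mu> - B * int i)" if "j < k" for i j
  proof -
    have "val_ge (coeff (r ^ j) i) (int j * \<mu> - B * int i)"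
      using dominant_span_power[OF r, of j] by (simp add: dominant_span_def)
    then have "val_ge (coeff p j * coeff (r ^ j) i) (0 + (int j * \<mu> - B * int i))"
      using integral by (intro val_ge_mult) auto
    moreover have "int k * \<mu> < int j * \<mu>"
      using \<open>j < k\<close> \<open>\<mu> < 0\<close> by (simp add: mult_strict_right_mono_neg)
    ultimately show ?thesis
      by (auto intro: val_ge_imp_gt)
  qed
  then have "\<forall>i. val_gt (coeff (\<Sum>j<k. [:coeff p j:] * r ^ j) i) (int k * \<mu> - B * int i)"
    by (auto simp: coeff_sum intro: val_gt_sum)
  then show ?thesis
    unfolding decomp k_def[symmetric]
    using dominant_span_add_smaller dominant_span_power[OF r, of k] by simp
qed

lemma dominant_span_full_factor:
  assumes pq: "dominant_span B (p * q) c 0 (degree (p * q))" and "p \<noteq> 0" and "q \<noteq> 0"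
  shows "\<exists>c'. dominant_span B p c' 0 (degree p)"
proof -
  obtain c1 l1 h1 c2 l2 h2 where p: "dominant_span B p c1 l1 h1" and q: "dominant_span B q c2 l2 h2"
    using dominant_span_exists \<open>p \<noteq> 0\<close> \<open>q \<noteq> 0\<close> by meson
  have "l1 + l2 = 0" and "h1 + h2 = degree p + degree q"
    using dominant_span_unique[OF pq dominant_span_mult[OF p q]] \<open>p \<noteq> 0\<close> \<open>q \<noteq> 0\<close>
    by (auto simp: degree_mult_eq)
  moreover have "h1 \<le> degree p" and "h2 \<le> degree q"
    using p q by (auto simp: dominant_span_def intro: le_degree)
  ultimately have "l1 = 0" and "h1 = degree p"
    by linarith+
  then show ?thesis
    using p by blast
qed

lemma dominant_span_mult_width:
  assumes g: "dominant_span B g cg lg hg" and gq: "dominant_span B (g * q) c l h"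
  shows "hg - lg \<le> h - l"
proof -
  have "q \<noteq> 0"
    using gq by (auto simp: dominant_span_def)
  then obtain cq lq hq where q: "dominant_span B q cq lq hq"
    using dominant_span_exists by blast
  then have "lq \<le> hq"
    by (simp add: dominant_span_def)
  then show ?thesis
    using dominant_span_unique[OF gq dominant_span_mult[OF g q]] by simp
qed

lemma dominant_span_single_if_values_dvd:
  assumes r: "dominant_span 1 r \<mu> l h" and "\<forall>x. x \<noteq> 0 \<longrightarrow> int n dvd v x" and "degree r < n"
  shows "l = h"
proof -
  have "l \<le> h" "h < n" "coeff r l \<noteq> 0" "coeff r h \<noteq> 0"
    using r \<open>degree r < n\<close> by (auto simp: dominant_span_def dest: le_degree)
  moreover have "int h - int l = v (coeff r l) - v (coeff r h)"
    using r by (simp add: dominant_span_def algebra_simps)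
  ultimately have "int n dvd int h - int l"
    using assms(2) by (metis dvd_diff)
  then show ?thesis
    using zdvd_not_zless[of "int h - int l" "int n"] \<open>l \<le> h\<close> \<open>h < n\<close> by fastforce
qed

end

section \<open>Pure polynomials\<close>

lemma (in int_valuation) irreducible_binomial:
  assumes "0 < n" and "a \<noteq> 0" and coprime: "coprime (v a) (int n)"
  shows "irreducible (monom 1 n + [:a:])"
proof -
  interpret w: int_valuation "\<lambda>x. int n * v x"
    by (rule int_valuation_scale) (simp_all add: int_valuation_axioms)
  define f where "f = monom 1 n + [:a:]"
  have deg_f: "degree f = n"
    unfolding f_def using \<open>0 < n\<close> by (simp add: degree_add_eq_left degree_monom_eq)
  then have "f \<noteq> 0"
    using \<open>0 < n\<close> by auto
  have span_f: "w.dominant_span (v a) f (v a * int n) 0 (degree f)"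
    unfolding deg_f unfolding f_def using assms by (intro w.dominant_span_binomial) simp_all
  show ?thesis
    unfolding f_def[symmetric]
  proof (rule irreducibleI[OF \<open>f \<noteq> 0\<close>])
    show "\<not> is_unit f"
      using deg_f \<open>0 < n\<close> by (auto simp: is_unit_iff_degree)
  next
    fix g q assume fgq: "f = g * q"
    show "is_unit g \<or> is_unit q"
    proof (rule ccontr)
      assume "\<not> (is_unit g \<or> is_unit q)"
      moreover have "g \<noteq> 0" "q \<noteq> 0"
        using fgq \<open>f \<noteq> 0\<close> by auto
      ultimately have "0 < degree g" "degree g < n"
        using fgq deg_f by (auto simp: is_unit_iff_degree degree_mult_eq)
      obtain c where "w.dominant_span (v a) g c 0 (degree g)"
        using w.dominant_span_full_factor span_f fgq \<open>g \<noteq> 0\<close> \<open>q \<noteq> 0\<close> by blast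
      then have "int n * v (coeff g 0) = c" "int n * v (lead_coeff g) + v a * int (degree g) = c"
        by (auto simp: w.dominant_span_def)
      then have "int n dvd v a * int (degree g)"
        by (metis add_diff_cancel_left' dvd_diff dvd_triv_left)
      then have "n dvd degree g"
        using coprime by (metis coprime_commute coprime_dvd_mult_right_iff int_dvd_int_iff)
      then show False
        using \<open>0 < degree g\<close> \<open>degree g < n\<close> by (simp add: nat_dvd_not_less)
    qed
  qed
qed

lemma (in int_valuation) coeff_in_val_ring_if_integral_mod_pure_eisenstein:
  assumes "0 < n" and "b \<noteq> 0" and "v b = 1" and "degree r < n"
    and monic: "lead_coeff p = 1" and integral: "\<forall>j. coeff p j \<in> val_ring v"
    and dvd: "(monom 1 n + [:- b:]) dvd pcompose p r"
  shows "coeff r i \<in> val_ring v"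
proof (rule ccontr)
  assume "coeff r i \<notin> val_ring v"
  then have "coeff r i \<noteq> 0" and "v (coeff r i) \<le> - 1"
    by (auto simp: val_ring_def)
  interpret w: int_valuation "\<lambda>x. int n * v x"
    by (rule int_valuation_scale) (simp_all add: int_valuation_axioms)
  obtain \<mu> l h where r: "w.dominant_span 1 r \<mu> l h"
    using w.dominant_span_exists \<open>coeff r i \<noteq> 0\<close> by (metis coeff_0)
  have "l = h"
    using w.dominant_span_single_if_values_dvd[OF r _ \<open>degree r < n\<close>] by simp
  have "i < n"
    using le_degree[OF \<open>coeff r i \<noteq> 0\<close>] \<open>degree r < n\<close> by simp
  moreover have "int n * v (coeff r i) \<le> int n * (- 1)"
    using \<open>v (coeff r i) \<le> - 1\<close> by (intro mult_left_mono) auto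
  ultimately have "\<mu> < 0"
    using w.dominant_span_weight(1)[OF r \<open>coeff r i \<noteq> 0\<close>] by linarith
  have "\<forall>j. w.val_ge (coeff p j) 0"
    using integral by (auto simp: val_ring_def w.val_ge_def zero_le_mult_iff)
  then have "w.dominant_span 1 (pcompose p r) (int (degree p) * \<mu>) (degree p * l) (degree p * l)"
    using w.dominant_span_pcompose r \<open>l = h\<close> \<open>\<mu> < 0\<close> monic by blast
  moreover obtain Q where "pcompose p r = (monom 1 n + [:- b:]) * Q"
    using dvd by (elim dvdE)
  moreover have "w.dominant_span 1 (monom 1 n + [:- b:]) (1 * int n) 0 n"
    using assms(1-3) by (intro w.dominant_span_binomial) (simp_all add: v_minus)
  ultimately have "n - 0 \<le> degree p * l - degree p * l"
    using w.dominant_span_mult_width by metis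
  then show False
    using \<open>0 < n\<close> by simp
qed

section \<open>Integral elements and the determinant trick\<close>

definition is_subring :: "'a::comm_ring_1 set \<Rightarrow> bool" where
  "is_subring R \<longleftrightarrow> 0 \<in> R \<and> 1 \<in> R \<and> (\<forall>x\<in>R. \<forall>y\<in>R. x + y \<in> R \<and> x * y \<in> R) \<and> (\<forall>x\<in>R. - x \<in> R)"

definition integral_over :: "'a::comm_ring_1 set \<Rightarrow> 'a \<Rightarrow> bool" where
  "integral_over R x \<longleftrightarrow> (\<exists>p. lead_coeff p = 1 \<and> (\<forall>i. coeff p i \<in> R) \<and> poly p x = 0)"

lemma integral_closure_iff: "x \<in> integral_closure R L \<longleftrightarrow> x \<in> L \<and> integral_over R x"
  by (simp add: integral_closure_def integral_over_def)

lemma subring_sum: "is_subring R \<Longrightarrow> (\<And>i. i \<in> A \<Longrightarrow> f i \<in> R) \<Longrightarrow> sum f A \<in> R"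
  by (induction A rule: infinite_finite_induct) (simp_all add: is_subring_def)

lemma subring_prod: "is_subring R \<Longrightarrow> (\<And>i. i \<in> A \<Longrightarrow> f i \<in> R) \<Longrightarrow> prod f A \<in> R"
  by (induction A rule: infinite_finite_induct) (simp_all add: is_subring_def)

lemma subring_poly_coeffs:
  assumes "is_subring R"
  shows "is_subring {p. \<forall>i. coeff p i \<in> R}"
  using assms coeff_mult_semiring_closed[of R]
  unfolding is_subring_def by (auto simp: coeff_1)

lemma subring_image:
  assumes "is_subring R" and "comm_ring_hom f"
  shows "is_subring (f ` R)"
proof -
  interpret comm_ring_hom f by fact
  have "0 \<in> f ` R" and "1 \<in> f ` R"
    using assms(1) image_eqI[of 0 f 0 R] image_eqI[of 1 f 1 R] by (simp_all add: is_subring_def)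
  moreover have "f x + f y \<in> f ` R" "f x * f y \<in> f ` R" "- f x \<in> f ` R" if "x \<in> R" "y \<in> R" for x y
    using that assms(1) by (simp_all add: is_subring_def flip: hom_add hom_mult hom_uminus)
  ultimately show ?thesis
    unfolding is_subring_def by auto
qed

lemma (in int_valuation) subring_val_ring: "is_subring (val_ring v)"
proof -
  have "val_ge (x + y) 0" "val_ge (x * y) 0" if "val_ge x 0" "val_ge y 0" for x y
    using val_ge_add[OF that] val_ge_mult[OF that] by simp_all
  moreover have "val_ge 0 0" "val_ge 1 0" "val_ge (- x) 0 \<longleftrightarrow> val_ge x 0" for x
    by (simp_all add: val_ge_def v_minus)
  ultimately show ?thesis
    unfolding is_subring_def by (auto simp: val_ring_iff_val_ge)
qed

lemma det_in_subring:
  assumes "is_subring R" and "A \<in> carrier_mat n n" and "\<And>i j. i < n \<Longrightarrow> j < n \<Longrightarrow> A $$ (i, j) \<in> R"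
  shows "det A \<in> R"
proof -
  have "signof p \<in> R" for p
    using assms(1) by (cases p rule: sign_cases) (simp_all add: is_subring_def)
  moreover have "(\<Prod>i = 0..<n. A $$ (i, p i)) \<in> R" if "p permutes {0..<n}" for p
    using that assms(3) by (intro subring_prod[OF assms(1)]) (simp add: permutes_in_image)
  ultimately show ?thesis
    using assms(1,2) unfolding det_def by (auto intro!: subring_sum simp: is_subring_def)
qed

lemma char_poly_coeff_in_subring:
  assumes R: "is_subring R" and A: "A \<in> carrier_mat n n" and "\<And>i j. i < n \<Longrightarrow> j < n \<Longrightarrow> A $$ (i, j) \<in> R"
  shows "coeff (char_poly A) k \<in> R"
proof -
  have "char_poly_matrix A $$ (i, j) \<in> {p. \<forall>k. coeff p k \<in> R}" if "i < n" "j < n" for i j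
    using that A assms(3)[OF that] R
    by (auto simp: char_poly_matrix_def coeff_pCons is_subring_def split: nat.split)
  then have "char_poly A \<in> {p. \<forall>k. coeff p k \<in> R}"
    unfolding char_poly_def using A by (intro det_in_subring[OF subring_poly_coeffs[OF R], of _ n]) auto
  then show ?thesis by simp
qed

lemma integral_over_if_eigenvector:
  fixes x :: "'a::field" and n :: nat
  assumes R: "is_subring R" and "i0 < n" and "w i0 \<noteq> 0"
    and eigen: "\<And>i. i < n \<Longrightarrow> x * w i = (\<Sum>j<n. C i j * w j)"
    and C: "\<And>i j. C i j \<in> R"
  shows "integral_over R x"
proof -
  define A where "A = mat n n (\<lambda>(i, j). C i j)"
  have A: "A \<in> carrier_mat n n"
    by (simp add: A_def)
  have "eigenvector A (vec n w) x"
    unfolding eigenvector_def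
  proof (intro conjI)
    show "vec n w \<noteq> 0\<^sub>v (dim_row A)"
      using \<open>i0 < n\<close> \<open>w i0 \<noteq> 0\<close> by (auto simp: A_def vec_eq_iff)
    show "A *\<^sub>v vec n w = x \<cdot>\<^sub>v vec n w"
      using eigen by (auto simp: A_def scalar_prod_def atLeast0LessThan mult.commute intro!: eq_vecI)
  qed (simp add: A_def)
  then have "poly (char_poly A) x = 0"
    using eigenvalue_root_char_poly[OF A] by (auto simp: eigenvalue_def)
  moreover have "lead_coeff (char_poly A) = 1"
    using degree_monic_char_poly[OF A] by simp
  ultimately show ?thesis
    unfolding integral_over_def
    using char_poly_coeff_in_subring[OF R A] C by (auto simp: A_def)
qed

lemma ring_adjoin_mult:
  assumes "is_subring R" and "x \<in> ring_adjoin R \<theta>" and "y \<in> ring_adjoin R \<theta>"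
  shows "x * y \<in> ring_adjoin R \<theta>"
proof -
  obtain p q where "x = poly p \<theta>" "y = poly q \<theta>" "\<forall>i. coeff p i \<in> R" "\<forall>i. coeff q i \<in> R"
    using assms(2,3) by (auto simp: ring_adjoin_def)
  then show ?thesis
    using subring_poly_coeffs[OF assms(1)] unfolding ring_adjoin_def is_subring_def
    by (auto intro!: exI[of _ "p * q"])
qed

lemma power_in_ring_adjoin: "is_subring R \<Longrightarrow> \<theta> ^ k \<in> ring_adjoin R \<theta>"
  unfolding ring_adjoin_def is_subring_def
  by (auto intro!: exI[of _ "monom 1 k"] simp: poly_monom coeff_monom)

lemma ring_adjoin_power_basis:
  assumes R: "is_subring R" and "0 < n" and "\<theta> ^ n \<in> R" and "y \<in> ring_adjoin R \<theta>"
  shows "\<exists>c. (\<forall>j. c j \<in> R) \<and> y = (\<Sum>j<n. c j * \<theta> ^ j)"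
proof -
  obtain p where y: "y = poly p \<theta>" and p: "\<forall>i. coeff p i \<in> R"
    using assms(4) by (auto simp: ring_adjoin_def)
  obtain n' where n: "n = Suc n'"
    using \<open>0 < n\<close> by (cases n) auto
  have "\<exists>c. (\<forall>j. c j \<in> R) \<and> poly p \<theta> = (\<Sum>j<n. c j * \<theta> ^ j)"
    using p
  proof (induction p)
    case 0
    show ?case
      using R by (auto simp: is_subring_def intro!: exI[of _ "\<lambda>_. 0"])
  next
    case (pCons a p)
    have "a \<in> R" and "\<forall>i. coeff p i \<in> R"
      using spec[OF pCons.prems, of 0] spec[OF pCons.prems, of "Suc i" for i] by simp_all
    then obtain c where c: "\<forall>j. c j \<in> R" and p: "poly p \<theta> = (\<Sum>j<n. c j * \<theta> ^ j)"
      using pCons.IH by blast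
    \<comment> \<open>multiplying by \<theta> shifts the coordinates; \<theta>^n wraps around into the constant term\<close>
    define c' where "c' j = (if j = 0 then a + c n' * \<theta> ^ n else c (j - 1))" for j
    have "poly (pCons a p) \<theta> = a + (\<Sum>j<n'. c j * \<theta> ^ Suc j) + c n' * \<theta> ^ n"
      unfolding poly_pCons p n sum.lessThan_Suc
      by (simp add: distrib_left sum_distrib_left mult_ac)
    also have "\<dots> = (\<Sum>j<n. c' j * \<theta> ^ j)"
      unfolding n sum.lessThan_Suc_shift c'_def by (simp add: add_ac)
    finally have "poly (pCons a p) \<theta> = (\<Sum>j<n. c' j * \<theta> ^ j)" .
    moreover have "\<forall>j. c' j \<in> R"
      using c R \<open>a \<in> R\<close> \<open>\<theta> ^ n \<in> R\<close> by (simp add: c'_def is_subring_def)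
    ultimately show ?case
      by blast
  qed
  then show ?thesis
    by (simp add: y)
qed

lemma integral_over_ring_adjoin:
  assumes R: "is_subring R" and "0 < n" and "\<theta> ^ n \<in> R" and y: "y \<in> ring_adjoin R \<theta>"
  shows "integral_over R y"
proof -
  have "\<forall>i. \<exists>c. (\<forall>j. c j \<in> R) \<and> y * \<theta> ^ i = (\<Sum>j<n. c j * \<theta> ^ j)"
    using ring_adjoin_power_basis[OF R \<open>0 < n\<close> \<open>\<theta> ^ n \<in> R\<close>]
      ring_adjoin_mult[OF R y power_in_ring_adjoin[OF R]] by blast
  then obtain C where "\<And>i. (\<forall>j. C i j \<in> R) \<and> y * \<theta> ^ i = (\<Sum>j<n. C i j * \<theta> ^ j)"
    by metis
  then show ?thesis
    using \<open>0 < n\<close> by (intro integral_over_if_eigenvector[OF R, of 0 n "\<lambda>j. \<theta> ^ j" y C]) auto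
qed

section \<open>Simple field extensions\<close>

lemma gen_subfield_is_subfield: "is_subfield (gen_subfield A)"
  unfolding gen_subfield_def is_subfield_def by auto

lemma subset_gen_subfield: "A \<subseteq> gen_subfield A"
  unfolding gen_subfield_def by auto

lemma gen_subfield_least: "is_subfield F \<Longrightarrow> A \<subseteq> F \<Longrightarrow> gen_subfield A \<subseteq> F"
  unfolding gen_subfield_def by auto

lemma gen_subfield_adjoin_swap:
  assumes "x \<in> gen_subfield (A \<union> {y})" and "y \<in> gen_subfield (A \<union> {x})"
  shows "gen_subfield (A \<union> {x}) = gen_subfield (A \<union> {y})"
  using assms subset_gen_subfield[of "A \<union> {x}"] subset_gen_subfield[of "A \<union> {y}"]
  by (intro equalityI gen_subfield_least gen_subfield_is_subfield) auto

lemma subfield_power: "is_subfield F \<Longrightarrow> x \<in> F \<Longrightarrow> x ^ k \<in> F"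
  by (induction k) (simp_all add: is_subfield_def)

lemma subfield_inverse: "is_subfield F \<Longrightarrow> x \<in> F \<Longrightarrow> inverse x \<in> F"
  by (cases "x = 0") (simp_all add: is_subfield_def)

lemma subfield_power_int: "is_subfield F \<Longrightarrow> x \<in> F \<Longrightarrow> x powi k \<in> F"
  by (simp add: power_int_def subfield_power subfield_inverse)

lemma subfield_divide: "is_subfield F \<Longrightarrow> x \<in> F \<Longrightarrow> y \<in> F \<Longrightarrow> x / y \<in> F"
  unfolding divide_inverse by (simp add: is_subfield_def subfield_inverse)

lemma subfield_poly:
  assumes F: "is_subfield F" and "z \<in> F" and "\<forall>i. coeff p i \<in> F"
  shows "poly p z \<in> F"
  using assms(3)
proof (induction p)
  case (pCons a p)
  then show ?case
    using F \<open>z \<in> F\<close> spec[OF pCons.prems, of 0] spec[OF pCons.prems, of "Suc i" for i]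
    by (simp add: is_subfield_def)
qed (use F in \<open>simp add: is_subfield_def\<close>)

lemma field_embedding_imp_field_hom:
  assumes "field_embedding \<phi>"
  shows "field_hom \<phi>"
proof -
  have add: "\<phi> (x + y) = \<phi> x + \<phi> y" for x y
    using assms by (simp add: field_embedding_def)
  then have "\<phi> 0 = 0"
    by (metis add_cancel_right_right add_0)
  with add assms show ?thesis
    by unfold_locales (simp_all add: field_embedding_def)
qed

lemma poly_bezout_common_divisor:
  fixes g q :: "'a::field poly"
  assumes "g \<noteq> 0"
  shows "\<exists>u w. (u * g + w * q) dvd g \<and> (u * g + w * q) dvd q"
proof -
  define J where "J = {u * g + w * q | u w. True}"
  have "g = 1 * g + 0 * q" and "q = 0 * g + 1 * q"
    by simp_all
  then have "g \<in> J" and "q \<in> J"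
    unfolding J_def by blast+
  obtain d where "d \<in> J \<and> d \<noteq> 0" and d_min: "\<forall>e. e \<in> J \<and> e \<noteq> 0 \<longrightarrow> degree d \<le> degree e"
    using ex_has_least_nat[of "\<lambda>e. e \<in> J \<and> e \<noteq> 0" g degree] \<open>g \<in> J\<close> \<open>g \<noteq> 0\<close> by blast
  then obtain u0 w0 where d: "d = u0 * g + w0 * q" and "d \<noteq> 0"
    by (auto simp: J_def)
  \<comment> \<open>J is an ideal, so a nonzero element of least degree divides all of J\<close>
  have "d dvd e" if "e \<in> J" for e
  proof -
    obtain u w where e: "e = u * g + w * q"
      using \<open>e \<in> J\<close> by (auto simp: J_def)
    have "e mod d = (u - e div d * u0) * g + (w - e div d * w0) * q"
      unfolding minus_div_mult_eq_mod[symmetric] by (simp add: e d algebra_simps)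
    then have "e mod d \<in> J"
      by (auto simp: J_def)
    then have "e mod d = 0"
      using d_min degree_mod_less[OF \<open>d \<noteq> 0\<close>, of e] by (meson leD)
    then show ?thesis
      by (simp add: mod_eq_0_iff_dvd)
  qed
  then show ?thesis
    using \<open>g \<in> J\<close> \<open>q \<in> J\<close> d by blast
qed

lemma irreducible_bezout:
  fixes g q :: "'a::field poly"
  assumes irr: "irreducible g" and "\<not> g dvd q"
  shows "\<exists>u w. u * g + w * q = 1"
proof -
  obtain u w where "(u * g + w * q) dvd g" and "(u * g + w * q) dvd q"
    using poly_bezout_common_divisor[of g q] irr by auto
  then obtain k where k: "g = (u * g + w * q) * k"
    by (elim dvdE)
  have "\<not> is_unit k"
  proof
    assume "is_unit k"
    then obtain k' where "1 = k * k'"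
      by (elim dvdE)
    then have "u * g + w * q = g * k'"
      using k by (metis mult.assoc mult.right_neutral)
    then have "g dvd u * g + w * q"
      by (rule dvdI)
    then show False
      using \<open>\<not> g dvd q\<close> \<open>(u * g + w * q) dvd q\<close> dvd_trans by blast
  qed
  then have "is_unit (u * g + w * q)"
    using irreducibleD[OF irr k] by blast
  then obtain d' where "1 = (u * g + w * q) * d'"
    by (elim dvdE)
  then have "(d' * u) * g + (d' * w) * q = 1"
    by (simp add: algebra_simps)
  then show ?thesis
    by blast
qed

lemma eval_invertible_mod_irreducible:
  assumes "field_hom \<phi>" and "irreducible g" and "poly (map_poly \<phi> g) \<theta> = 0" and "\<not> g dvd q"
  shows "\<exists>w. poly (map_poly \<phi> w) \<theta> * poly (map_poly \<phi> q) \<theta> = 1"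
proof -
  interpret field_hom \<phi> by fact
  interpret map_poly: map_poly_idom_hom \<phi> ..
  obtain u w where "u * g + w * q = 1"
    using irreducible_bezout[OF assms(2,4)] by blast
  then have "poly (map_poly \<phi> (u * g + w * q)) \<theta> = 1"
    by simp
  then show ?thesis
    using assms(3) by (auto simp: hom_distribs)
qed

lemma is_subfield_eval_range:
  assumes hom: "field_hom \<phi>" and "irreducible g" and "poly (map_poly \<phi> g) \<theta> = 0"
  shows "is_subfield (range (\<lambda>q. poly (map_poly \<phi> q) \<theta>))"
proof -
  interpret field_hom \<phi> by fact
  interpret map_poly: map_poly_idom_hom \<phi> ..
  define E where "E = (\<lambda>q. poly (map_poly \<phi> q) \<theta>)"
  have E_add: "E (p + q) = E p + E q" and E_mult: "E (p * q) = E p * E q"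
    and E_uminus: "E (- p) = - E p" for p q
    by (simp_all add: E_def hom_distribs)
  show ?thesis
    unfolding E_def[symmetric] is_subfield_def
  proof (intro conjI ballI impI)
    show "0 \<in> range E" "1 \<in> range E"
      using rangeI[of E 0] rangeI[of E 1] by (simp_all add: E_def)
    fix x y assume "x \<in> range E" "y \<in> range E"
    then show "x + y \<in> range E" "x * y \<in> range E"
      by (auto simp flip: E_add E_mult)
  next
    fix x assume x: "x \<in> range E"
    then show "- x \<in> range E"
      by (auto simp flip: E_uminus)
    assume "x \<noteq> 0"
    obtain q where "x = E q"
      using x by blast
    moreover have "\<not> g dvd q"
    proof
      assume "g dvd q"
      then obtain k where "q = g * k"
        by (elim dvdE)
      then have "E q = E g * E k"
        by (simp add: E_mult)
      then show False
        using \<open>x \<noteq> 0\<close> \<open>x = E q\<close> assms(3) by (simp add: E_def)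
    qed
    ultimately obtain w where "E w * x = 1"
      using eval_invertible_mod_irreducible[OF hom assms(2,3)] by (auto simp: E_def)
    then show "inverse x \<in> range E"
      by (metis inverse_unique mult.commute rangeI)
  qed
qed

lemma gen_subfield_eq_eval_range:
  assumes hom: "field_hom \<phi>" and "irreducible g" and "poly (map_poly \<phi> g) \<theta> = 0"
  shows "gen_subfield (range \<phi> \<union> {\<theta>}) = range (\<lambda>q. poly (map_poly \<phi> q) \<theta>)"
proof -
  interpret field_hom \<phi> by fact
  interpret map_poly: map_poly_idom_hom \<phi> ..
  have "\<phi> c = poly (map_poly \<phi> [:c:]) \<theta>" and "\<theta> = poly (map_poly \<phi> [:0, 1:]) \<theta>" for c
    by (simp_all add: hom_distribs)
  then have "range \<phi> \<union> {\<theta>} \<subseteq> range (\<lambda>q. poly (map_poly \<phi> q) \<theta>)"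
    by (metis (no_types, lifting) Un_least empty_subsetI image_subsetI insert_subset rangeI)
  then have "gen_subfield (range \<phi> \<union> {\<theta>}) \<subseteq> range (\<lambda>q. poly (map_poly \<phi> q) \<theta>)"
    by (intro gen_subfield_least is_subfield_eval_range[OF assms])
  moreover have "poly (map_poly \<phi> q) \<theta> \<in> gen_subfield (range \<phi> \<union> {\<theta>})" for q
    using subset_gen_subfield[of "range \<phi> \<union> {\<theta>}"]
    by (intro subfield_poly gen_subfield_is_subfield) auto
  ultimately show ?thesis
    by blast
qed

lemma ring_adjoin_subset_gen_subfield:
  assumes "R \<subseteq> A"
  shows "ring_adjoin R \<theta> \<subseteq> gen_subfield (A \<union> {\<theta>})"
proof
  fix x assume "x \<in> ring_adjoin R \<theta>"
  then obtain p where x: "x = poly p \<theta>" and "\<forall>i. coeff p i \<in> R"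
    by (auto simp: ring_adjoin_def)
  moreover have sub: "A \<union> {\<theta>} \<subseteq> gen_subfield (A \<union> {\<theta>})"
    by (rule subset_gen_subfield)
  ultimately have "\<forall>i. coeff p i \<in> gen_subfield (A \<union> {\<theta>})"
    using \<open>R \<subseteq> A\<close> by blast
  then show "x \<in> gen_subfield (A \<union> {\<theta>})"
    unfolding x using sub by (simp add: subfield_poly gen_subfield_is_subfield)
qed

lemma map_poly_preimage:
  assumes "field_hom \<phi>" and "0 \<in> A" and p: "\<forall>i. coeff p i \<in> \<phi> ` A"
  shows "\<exists>q. p = map_poly \<phi> q \<and> (\<forall>i. coeff q i \<in> A)"
proof -
  interpret field_hom \<phi> by fact
  define q where "q = map_poly (inv_into A \<phi>) p"
  have "inv_into A \<phi> 0 = 0"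
    using inv_into_f_f[of \<phi> A 0] \<open>0 \<in> A\<close> by (simp add: inj_on_def)
  then have coeff_q: "coeff q i = inv_into A \<phi> (coeff p i)" for i
    by (simp add: q_def coeff_map_poly)
  have "coeff q i \<in> A" for i
    using p by (simp add: coeff_q inv_into_into)
  moreover have "p = map_poly \<phi> q"
    using p by (simp add: poly_eq_iff coeff_q f_inv_into_f)
  ultimately show ?thesis
    by blast
qed

lemma integral_over_hom_image:
  assumes hom: "field_hom \<phi>" and "0 \<in> A" and "integral_over (\<phi> ` A) x"
  shows "\<exists>p. lead_coeff p = 1 \<and> (\<forall>i. coeff p i \<in> A) \<and> poly (map_poly \<phi> p) x = 0"
proof -
  interpret field_hom \<phi> by fact
  obtain p where "lead_coeff p = 1" and p: "\<forall>i. coeff p i \<in> \<phi> ` A" and "poly p x = 0"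
    using assms(3) by (auto simp: integral_over_def)
  moreover obtain p0 where "p = map_poly \<phi> p0" and "\<forall>i. coeff p0 i \<in> A"
    using map_poly_preimage[OF hom \<open>0 \<in> A\<close> p] by blast
  ultimately show ?thesis
    by auto
qed

lemma eval_poly_mod_root:
  assumes "field_hom \<phi>" and "poly (map_poly \<phi> g) \<theta> = 0"
  shows "poly (map_poly \<phi> (q mod g)) \<theta> = poly (map_poly \<phi> q) \<theta>"
proof -
  interpret field_hom \<phi> by fact
  interpret map_poly: map_poly_idom_hom \<phi> ..
  have "map_poly \<phi> q = map_poly \<phi> (q div g) * map_poly \<phi> g + map_poly \<phi> (q mod g)"
    by (metis div_mult_mod_eq map_poly.hom_add map_poly.hom_mult)
  then show ?thesis
    using assms(2) by simp
qed

section \<open>Pure Eisenstein extensions\<close>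

lemma (in int_valuation) integral_in_ring_adjoin_pure_eisenstein:
  fixes \<phi> :: "'a \<Rightarrow> 'b::field"
  assumes hom: "field_hom \<phi>" and "0 < n" and "b \<noteq> 0" and "v b = 1" and \<theta>: "\<theta> ^ n = \<phi> b"
    and x: "x = poly (map_poly \<phi> q) \<theta>" and integral: "integral_over (\<phi> ` val_ring v) x"
  shows "x \<in> ring_adjoin (\<phi> ` val_ring v) \<theta>"
proof -
  interpret field_hom \<phi> by fact
  interpret map_poly: map_poly_idom_hom \<phi> ..
  define g where "g = monom 1 n + [:- b:]"
  have "irreducible g"
    unfolding g_def using assms(2-4) by (intro irreducible_binomial) (simp_all add: v_minus)
  have g_root: "poly (map_poly \<phi> g) \<theta> = 0"
    using \<theta> by (simp add: g_def hom_distribs poly_monom)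
  obtain p where "lead_coeff p = 1" and p_integral: "\<forall>i. coeff p i \<in> val_ring v"
    and "poly (map_poly \<phi> p) x = 0"
    using integral_over_hom_image[OF hom _ integral] by (auto simp: val_ring_def)
  define r where "r = q mod g"
  have "degree g = n"
    using \<open>0 < n\<close> by (simp add: g_def degree_add_eq_left degree_monom_eq)
  then have "g \<noteq> 0"
    using \<open>0 < n\<close> by auto
  then have "degree r < n"
    using degree_mod_less'[of g q] \<open>0 < n\<close> \<open>degree g = n\<close> by (cases "r = 0") (auto simp: r_def)
  have x_r: "x = poly (map_poly \<phi> r) \<theta>"
    using x eval_poly_mod_root[OF hom g_root] by (simp add: r_def)
  then have "poly (map_poly \<phi> (pcompose p r)) \<theta> = 0"
    using \<open>poly (map_poly \<phi> p) x = 0\<close> by (simp add: hom_distribs poly_pcompose)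
  then have "g dvd pcompose p r"
    using eval_invertible_mod_irreducible[OF hom \<open>irreducible g\<close> g_root, of "pcompose p r"]
    by (metis mult_zero_right zero_neq_one)
  then have "\<forall>i. coeff r i \<in> val_ring v"
    using coeff_in_val_ring_if_integral_mod_pure_eisenstein[OF assms(2-4) \<open>degree r < n\<close>
        \<open>lead_coeff p = 1\<close> p_integral]
    unfolding g_def by blast
  then show ?thesis
    unfolding ring_adjoin_def x_r by (intro CollectI exI[of _ "map_poly \<phi> r"] conjI) auto
qed

theorem (in int_valuation) integral_closure_pure_eisenstein:
  fixes \<phi> :: "'a \<Rightarrow> 'b::field"
  assumes hom: "field_hom \<phi>" and "0 < n" and "b \<noteq> 0" and "v b = 1" and \<theta>: "\<theta> ^ n = \<phi> b"
  shows "integral_closure (\<phi> ` val_ring v) (gen_subfield (range \<phi> \<union> {\<theta>}))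
    = ring_adjoin (\<phi> ` val_ring v) \<theta>"
proof -
  interpret field_hom \<phi> by fact
  interpret map_poly: map_poly_idom_hom \<phi> ..
  have "irreducible (monom 1 n + [:- b:])"
    using assms(2-4) by (intro irreducible_binomial) (simp_all add: v_minus)
  moreover have "poly (map_poly \<phi> (monom 1 n + [:- b:])) \<theta> = 0"
    using \<theta> by (simp add: hom_distribs poly_monom)
  ultimately have L: "gen_subfield (range \<phi> \<union> {\<theta>}) = range (\<lambda>q. poly (map_poly \<phi> q) \<theta>)"
    using gen_subfield_eq_eval_range[OF hom] by blast
  have R: "is_subring (\<phi> ` val_ring v)"
    by (intro subring_image subring_val_ring) unfold_locales
  have "\<theta> ^ n \<in> \<phi> ` val_ring v"
    using \<theta> \<open>v b = 1\<close> by (auto simp: val_ring_def)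
  then have "integral_over (\<phi> ` val_ring v) x" if "x \<in> ring_adjoin (\<phi> ` val_ring v) \<theta>" for x
    using integral_over_ring_adjoin[OF R \<open>0 < n\<close>] that by blast
  moreover have "ring_adjoin (\<phi> ` val_ring v) \<theta> \<subseteq> gen_subfield (range \<phi> \<union> {\<theta>})"
    by (rule ring_adjoin_subset_gen_subfield) blast
  ultimately have "x \<in> integral_closure (\<phi> ` val_ring v) (gen_subfield (range \<phi> \<union> {\<theta>}))"
    if "x \<in> ring_adjoin (\<phi> ` val_ring v) \<theta>" for x
    unfolding integral_closure_iff using that by blast
  moreover have "x \<in> ring_adjoin (\<phi> ` val_ring v) \<theta>"
    if x: "x \<in> integral_closure (\<phi> ` val_ring v) (gen_subfield (range \<phi> \<union> {\<theta>}))" for x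
  proof -
    obtain q where "x = poly (map_poly \<phi> q) \<theta>" and "integral_over (\<phi> ` val_ring v) x"
      using x unfolding integral_closure_iff L by blast
    then show ?thesis
      by (rule integral_in_ring_adjoin_pure_eisenstein[OF hom assms(2-5)])
  qed
  ultimately show ?thesis
    by blast
qed

lemma pure_root_rescaling:
  fixes \<alpha> \<pi> :: "'a::field"
  assumes "\<alpha> \<noteq> 0" and "\<pi> \<noteq> 0" and "int m * s - int n * t = 1"
  shows "(\<alpha> powi s / \<pi> powi t) ^ n = (\<alpha> ^ n) powi s / \<pi> powi (t * int n)"
    and "\<alpha> = \<pi> powi (t * int m) / (\<alpha> ^ n) powi t * (\<alpha> powi s / \<pi> powi t) ^ m"
proof -
  show "(\<alpha> powi s / \<pi> powi t) ^ n = (\<alpha> ^ n) powi s / \<pi> powi (t * int n)"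
    by (simp add: power_divide power_int_power' power_int_power mult.commute)
  have "(\<alpha> powi s / \<pi> powi t) ^ m = \<alpha> powi (s * int m) / \<pi> powi (t * int m)"
    by (simp add: power_divide power_int_power')
  also have "s * int m = 1 + int n * t"
    using assms(3) by (simp add: algebra_simps)
  also have "\<alpha> powi (1 + int n * t) = \<alpha> * (\<alpha> ^ n) powi t"
    using \<open>\<alpha> \<noteq> 0\<close> by (simp add: power_int_add power_int_power)
  finally show "\<alpha> = \<pi> powi (t * int m) / (\<alpha> ^ n) powi t * (\<alpha> powi s / \<pi> powi t) ^ m"
    using assms(1,2) by (simp add: field_simps)
qed

lemma (in int_valuation) root_of_binomial:
  assumes "field_hom \<phi>" and "a \<noteq> 0" and "v a \<noteq> 0"
    and root: "poly (map_poly \<phi> (monom 1 n + [:a:])) \<alpha> = 0"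
  shows "0 < n" and "\<alpha> ^ n = \<phi> (- a)" and "\<alpha> \<noteq> 0"
proof -
  interpret field_hom \<phi> by fact
  interpret map_poly: map_poly_idom_hom \<phi> ..
  have "map_poly \<phi> [:a:] = [:\<phi> a:]"
    using \<open>a \<noteq> 0\<close> by (subst map_poly_pCons) simp_all
  then have "\<alpha> ^ n + \<phi> a = 0"
    using root by (simp add: map_poly.hom_add poly_monom)
  then show \<alpha>: "\<alpha> ^ n = \<phi> (- a)"
    by (simp add: hom_uminus eq_neg_iff_add_eq_0)
  show "0 < n"
  proof (rule ccontr)
    assume "\<not> 0 < n"
    then have "\<phi> (- a) = 1"
      using \<alpha> by simp
    then show False
      using \<open>v a \<noteq> 0\<close> v_minus[of a] by simp
  qed
  then show "\<alpha> \<noteq> 0"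
    using \<alpha> \<open>a \<noteq> 0\<close> by (auto simp: zero_power)
qed

lemma rescaled_pure_root:
  assumes "field_hom \<phi>" and "\<alpha> \<noteq> 0" and \<alpha>: "\<alpha> ^ n = \<phi> c" and "\<pi> \<noteq> 0"
    and st: "int m * s - int n * t = 1"
  defines "\<theta> \<equiv> \<alpha> powi s / \<phi> \<pi> powi t"
  shows "\<theta> ^ n = \<phi> (c powi s / \<pi> powi (t * int n))"
    and "gen_subfield (range \<phi> \<union> {\<alpha>}) = gen_subfield (range \<phi> \<union> {\<theta>})"
proof -
  interpret field_hom \<phi> by fact
  have hom_powi: "\<phi> (x powi k) = \<phi> x powi k" for x k
    by (cases "0 \<le> k") (simp_all add: power_int_def hom_power hom_inverse)
  show "\<theta> ^ n = \<phi> (c powi s / \<pi> powi (t * int n))"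
    using pure_root_rescaling(1)[OF \<open>\<alpha> \<noteq> 0\<close> _ st] \<open>\<pi> \<noteq> 0\<close>
    by (simp add: \<theta>_def \<alpha> hom_div hom_powi)
  have "\<alpha> = \<phi> (\<pi> powi (t * int m) / c powi t) * \<theta> ^ m"
    using pure_root_rescaling(2)[OF \<open>\<alpha> \<noteq> 0\<close> _ st] \<open>\<pi> \<noteq> 0\<close>
    by (simp add: \<theta>_def \<alpha> hom_div hom_powi)
  moreover have "\<phi> x * \<theta> ^ m \<in> gen_subfield (range \<phi> \<union> {\<theta>})" for x
  proof -
    have F: "is_subfield (gen_subfield (range \<phi> \<union> {\<theta>}))"
      by (rule gen_subfield_is_subfield)
    have "\<phi> x \<in> gen_subfield (range \<phi> \<union> {\<theta>})" "\<theta> \<in> gen_subfield (range \<phi> \<union> {\<theta>})"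
      using subset_gen_subfield[of "range \<phi> \<union> {\<theta>}"] by auto
    then show ?thesis
      using F subfield_power[OF F] by (simp add: is_subfield_def)
  qed
  moreover have "\<theta> \<in> gen_subfield (range \<phi> \<union> {\<alpha>})"
    unfolding \<theta>_def using subset_gen_subfield[of "range \<phi> \<union> {\<alpha>}"]
    by (intro subfield_divide subfield_power_int gen_subfield_is_subfield) auto
  ultimately show "gen_subfield (range \<phi> \<union> {\<alpha>}) = gen_subfield (range \<phi> \<union> {\<theta>})"
    by (intro gen_subfield_adjoin_swap) simp_all
qed

theorem corollary3p3:
  fixes \<nu> :: "'a::field \<Rightarrow> int" and \<pi> a :: 'a
    and \<phi> :: "'a \<Rightarrow> 'b::field" and \<alpha> :: 'b
    and n m :: nat and s t :: int
  assumes "discrete_valuation \<nu>"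
    and "\<pi> \<noteq> 0" and "\<nu> \<pi> = 1"
    and "a \<noteq> 0" and "\<nu> a = int m" and "m \<ge> 1" and "gcd m n = 1"
    and "field_embedding \<phi>"
    and "poly (map_poly \<phi> (monom 1 n + [:a:])) \<alpha> = 0"
    and "int m * s - int n * t = 1"
  shows "irreducible (monom 1 n + [:a:])
       \<and> integral_closure (\<phi> ` val_ring \<nu>) (gen_subfield (\<phi> ` UNIV \<union> {\<alpha>}))
         = ring_adjoin (\<phi> ` val_ring \<nu>) (\<alpha> powi s / \<phi> \<pi> powi t)"
proof -
  interpret int_valuation \<nu>
    using assms(1) by (rule discrete_valuation_imp_int_valuation)
  have hom: "field_hom \<phi>"
    using assms(8) by (rule field_embedding_imp_field_hom)
  have "0 < n" and \<alpha>: "\<alpha> ^ n = \<phi> (- a)" and "\<alpha> \<noteq> 0"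
    using root_of_binomial[OF hom assms(4) _ assms(9)] assms(5,6) by simp_all
  define b where "b = (- a) powi s / \<pi> powi (t * int n)"
  have "b \<noteq> 0" and "\<nu> b = 1"
    using assms(2-5,10) by (simp_all add: b_def v_divide v_power_int v_minus algebra_simps)
  have "coprime (\<nu> a) (int n)"
    using assms(5,7) by (simp add: coprime_iff_gcd_eq_1 gcd_int_int_eq)
  then show ?thesis
    using irreducible_binomial[OF \<open>0 < n\<close> assms(4)]
      rescaled_pure_root[OF hom \<open>\<alpha> \<noteq> 0\<close> \<alpha> assms(2,10), folded b_def]
      integral_closure_pure_eisenstein[OF hom \<open>0 < n\<close> \<open>b \<noteq> 0\<close> \<open>\<nu> b = 1\<close>]
    by simp
qed

end
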